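(* For every $n\geqslant 1$, $|\mathcal{OCI}_n|=3\cdot 2^n-2n-2$.
   Context: Let $\Omega_n=\{1<2<\cdots<n\}$, $\mathcal{I}_n$ the symmetric inverse monoid on $\Omega_n$. Let $g$ be the permutation $ig=i+1$ ($1\leqslant i\leqslant n-1$), $ng=1$, $\mathcal{C}_n=\{1,g,\ldots,g^{n-1}\}$, and $\mathcal{CI}_n=\{\alpha\in\mathcal{I}_n\mid \alpha=\sigma|_{\mathrm{Dom}(\alpha)}\text{ for some }\sigma\in\mathcal{C}_n\}$. A partial injection $\alpha$ with domain $\{a_1<\cdots<a_t\}$ is order-preserving if $a_1\alpha\leqslant\cdots\leqslant a_t\alpha$. $\mathcal{OCI}_n$ is the set of all order-preserving elements of $\mathcal{CI}_n$ (including the empty transformation). *)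

theory Defs
  imports Main
begin

text \<open>Partial injections on Omega_n = {1..n} are modelled as partial maps
  nat \<rightharpoonup> nat with domain and range inside {1..n}, injective on the domain.\<close>

definition sym_inv :: "nat \<Rightarrow> (nat \<rightharpoonup> nat) set" where
  "sym_inv n = {\<alpha>. dom \<alpha> \<subseteq> {1..n} \<and> ran \<alpha> \<subseteq> {1..n} \<and> inj_on \<alpha> (dom \<alpha>)}"

definition cyc_g :: "nat \<Rightarrow> nat \<Rightarrow> nat" where
  "cyc_g n i = (if i < n then i + 1 else 1)"

definition cyc_group :: "nat \<Rightarrow> (nat \<Rightarrow> nat) set" where
  "cyc_group n = {(cyc_g n) ^^ k | k. k < n}"

definition CI :: "nat \<Rightarrow> (nat \<rightharpoonup> nat) set" where
  "CI n = {\<alpha> \<in> sym_inv n. \<exists>\<sigma> \<in> cyc_group n. \<alpha> = (Some \<circ> \<sigma>) |` dom \<alpha>}"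

definition order_preserving :: "(nat \<rightharpoonup> nat) \<Rightarrow> bool" where
  "order_preserving \<alpha> \<longleftrightarrow>
     (\<forall>a \<in> dom \<alpha>. \<forall>b \<in> dom \<alpha>. a \<le> b \<longrightarrow> the (\<alpha> a) \<le> the (\<alpha> b))"

definition OCI :: "nat \<Rightarrow> (nat \<rightharpoonup> nat) set" where
  "OCI n = {\<alpha> \<in> CI n. order_preserving \<alpha>}"

end

theory Submission
  imports Defs
begin

text \<open>Every element of \<open>\<C>\<I>\<^sub>n\<close> is the restriction of a rotation \<open>g\<^sup>k\<close>, \<open>0 \<le> k < n\<close>, to a
  subset \<open>D\<close> of \<open>{1..n}\<close>, and a nonempty \<open>D\<close> determines \<open>k\<close>. The identity is order-preserving on
  every \<open>D\<close>, giving \<open>2\<^sup>n\<close> elements. For \<open>0 < k < n\<close> the rotation maps \<open>{1..n-k}\<close> increasingly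
  onto \<open>{k+1..n}\<close> and \<open>{n-k+1..n}\<close> increasingly onto \<open>{1..k}\<close>, so its restriction to \<open>D\<close> is
  order-preserving iff \<open>D\<close> lies in one of these two blocks: \<open>2\<^sup>n\<^sup>-\<^sup>k + 2\<^sup>k - 1\<close> choices.
  Counting the empty map once and summing over \<open>k\<close> gives \<open>3\<cdot>2\<^sup>n - 2n - 2\<close>.\<close>

definition cyc_shift :: "nat \<Rightarrow> nat \<Rightarrow> nat \<Rightarrow> nat" where
  "cyc_shift n k i = (if i + k \<le> n then i + k else i + k - n)"

definition shift_map :: "nat \<Rightarrow> nat \<Rightarrow> nat set \<Rightarrow> (nat \<rightharpoonup> nat)" where
  "shift_map n k D = (Some \<circ> cyc_shift n k) |` D"

definition op_domains :: "nat \<Rightarrow> nat \<Rightarrow> nat set set" where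
  "op_domains n k = {D. D \<subseteq> {1..n} \<and> order_preserving (shift_map n k D)}"

lemma cyc_g_funpow_eq_cyc_shift:
  assumes "k < n" "i \<in> {1..n}"
  shows "(cyc_g n ^^ k) i = cyc_shift n k i"
  using assms
proof (induction k)
  case 0
  then show ?case by (simp add: cyc_shift_def)
next
  case (Suc k)
  then show ?case by (auto simp: cyc_shift_def cyc_g_def)
qed

lemma cyc_shift_in_range: "k < n \<Longrightarrow> i \<in> {1..n} \<Longrightarrow> cyc_shift n k i \<in> {1..n}"
  by (auto simp: cyc_shift_def)

lemma inj_on_cyc_shift: "k < n \<Longrightarrow> inj_on (cyc_shift n k) {1..n}"
  by (auto simp: inj_on_def cyc_shift_def split: if_splits)

lemma cyc_shift_eq_imp_eq:
  "k < n \<Longrightarrow> k' < n \<Longrightarrow> i \<in> {1..n} \<Longrightarrow> cyc_shift n k i = cyc_shift n k' i \<Longrightarrow> k = k'"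
  by (auto simp: cyc_shift_def split: if_splits)

lemma dom_shift_map [simp]: "dom (shift_map n k D) = D"
  unfolding shift_map_def dom_restrict by (auto simp: dom_def)

lemma shift_map_apply: "i \<in> D \<Longrightarrow> shift_map n k D i = Some (cyc_shift n k i)"
  by (simp add: shift_map_def)

lemma inj_shift_map: "inj (shift_map n k)"
  by (rule injI) (metis dom_shift_map)

lemma shift_map_eq_empty_iff [simp]: "shift_map n k D = Map.empty \<longleftrightarrow> D = {}"
  by (metis dom_eq_empty_conv dom_shift_map)

lemma empty_eq_shift_map_iff [simp]: "Map.empty = shift_map n k D \<longleftrightarrow> D = {}"
  by (subst eq_commute) (rule shift_map_eq_empty_iff)

lemma CI_eq_shift_maps: "CI n = {shift_map n k D | k D. k < n \<and> D \<subseteq> {1..n}}"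
proof (intro set_eqI iffI)
  fix \<alpha> assume "\<alpha> \<in> CI n"
  then obtain k where k: "k < n" and \<alpha>: "\<alpha> = (Some \<circ> (cyc_g n ^^ k)) |` dom \<alpha>"
    and dom: "dom \<alpha> \<subseteq> {1..n}"
    by (auto simp: CI_def cyc_group_def sym_inv_def)
  have "\<alpha> = shift_map n k (dom \<alpha>)"
    using dom cyc_g_funpow_eq_cyc_shift[OF k]
    by (subst \<alpha>) (auto simp: shift_map_def restrict_map_def fun_eq_iff)
  with k dom show "\<alpha> \<in> {shift_map n k D | k D. k < n \<and> D \<subseteq> {1..n}}" by blast
next
  fix \<alpha> assume "\<alpha> \<in> {shift_map n k D | k D. k < n \<and> D \<subseteq> {1..n}}"
  then obtain k D where k: "k < n" and D: "D \<subseteq> {1..n}" and \<alpha>: "\<alpha> = shift_map n k D" by blast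
  have "ran \<alpha> \<subseteq> {1..n}"
    using D cyc_shift_in_range[OF k] by (auto simp: \<alpha> ran_def shift_map_def restrict_map_def)
  moreover have "inj_on \<alpha> (dom \<alpha>)"
    using inj_on_cyc_shift[OF k] D by (auto simp: \<alpha> inj_on_def shift_map_apply)
  moreover have "\<alpha> = (Some \<circ> (cyc_g n ^^ k)) |` dom \<alpha>"
    using D cyc_g_funpow_eq_cyc_shift[OF k]
    by (auto simp: \<alpha> shift_map_def restrict_map_def fun_eq_iff)
  moreover have "cyc_g n ^^ k \<in> cyc_group n"
    using k by (auto simp: cyc_group_def)
  moreover have "dom \<alpha> = D"
    by (simp add: \<alpha>)
  ultimately show "\<alpha> \<in> CI n"
    unfolding CI_def sym_inv_def using D by blast
qed

lemma OCI_eq_shift_maps: "OCI n = {shift_map n k D | k D. k < n \<and> D \<in> op_domains n k}"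
  by (auto simp: OCI_def CI_eq_shift_maps op_domains_def)

lemma order_preserving_shift_map_iff:
  "order_preserving (shift_map n k D) \<longleftrightarrow>
     (\<forall>a\<in>D. \<forall>b\<in>D. a \<le> b \<longrightarrow> cyc_shift n k a \<le> cyc_shift n k b)"
  by (simp add: order_preserving_def shift_map_apply)

lemma op_domains_0: "op_domains n 0 = Pow {1..n}"
  by (auto simp: op_domains_def order_preserving_shift_map_iff cyc_shift_def)

lemma op_domains_pos:
  assumes "0 < k" "k < n"
  shows "op_domains n k = Pow {1..n-k} \<union> Pow {n-k+1..n}"
proof (intro equalityI subsetI)
  fix D assume "D \<in> op_domains n k"
  then have D: "D \<subseteq> {1..n}"
    and mono: "\<And>a b. a \<in> D \<Longrightarrow> b \<in> D \<Longrightarrow> a \<le> b \<Longrightarrow> cyc_shift n k a \<le> cyc_shift n k b"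
    by (auto simp: op_domains_def order_preserving_shift_map_iff)
  show "D \<in> Pow {1..n-k} \<union> Pow {n-k+1..n}"
  proof (rule ccontr)
    assume "D \<notin> Pow {1..n-k} \<union> Pow {n-k+1..n}"
    then obtain a b where a: "a \<in> D" "a \<le> n - k" and b: "b \<in> D" "n - k < b"
      using D by (auto simp: subset_iff)
    with D assms have "cyc_shift n k a = a + k" "cyc_shift n k b = b + k - n" "1 \<le> a" "b \<le> n"
      by (auto simp: cyc_shift_def)
    txt \<open>\<open>a\<close> moves up past \<open>k\<close>, while \<open>b\<close> wraps around to at most \<open>k\<close>.\<close>
    with mono[OF a(1) b(1)] a b show False
      by linarith
  qed
next
  fix D assume D: "D \<in> Pow {1..n-k} \<union> Pow {n-k+1..n}"
  then have "order_preserving (shift_map n k D)"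
  proof (elim UnE PowD[elim_format])
    assume "D \<subseteq> {1..n-k}"
    then have "\<forall>a\<in>D. cyc_shift n k a = a + k"
      by (auto simp: cyc_shift_def subset_iff)
    then show ?thesis
      by (simp add: order_preserving_shift_map_iff)
  next
    assume "D \<subseteq> {n-k+1..n}"
    then have "\<forall>a\<in>D. cyc_shift n k a = a + k - n"
      using assms by (auto simp: cyc_shift_def subset_iff)
    then show ?thesis
      by (simp add: order_preserving_shift_map_iff diff_le_mono)
  qed
  moreover have "D \<subseteq> {1..n}"
    using D by (auto simp: subset_iff)
  ultimately show "D \<in> op_domains n k"
    by (simp add: op_domains_def)
qed

lemma finite_op_domains: "finite (op_domains n k)"
  by (rule finite_subset[of _ "Pow {1..n}"]) (auto simp: op_domains_def)

lemma empty_in_op_domains: "{} \<in> op_domains n k"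
  by (simp add: op_domains_def order_preserving_def)

lemma card_op_domains_pos:
  assumes "0 < k" "k < n"
  shows "card (op_domains n k) + 1 = 2 ^ (n - k) + 2 ^ k"
proof -
  have "{1..n-k} \<inter> {n-k+1..n} = {}"
    by auto
  then have "Pow {1..n-k} \<inter> Pow {n-k+1..n} = {{}}"
    by (metis Pow_Int_eq Pow_empty)
  moreover have "card {n-k+1..n} = k"
    using assms by simp
  ultimately show ?thesis
    using card_Un_Int[of "Pow {1..n-k}" "Pow {n-k+1..n}"]
    by (simp add: op_domains_pos[OF assms] card_Pow)
qed

lemma OCI_eq_insert_empty:
  assumes "0 < n"
  shows "OCI n = insert Map.empty (\<Union>k<n. shift_map n k ` (op_domains n k - {{}}))"
proof -
  have "Map.empty \<in> OCI n"
    using assms empty_in_op_domains[of n 0] unfolding OCI_eq_shift_maps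
    by (metis (mono_tags, lifting) mem_Collect_eq empty_eq_shift_map_iff)
  moreover have "OCI n - {Map.empty} = (\<Union>k<n. shift_map n k ` (op_domains n k - {{}}))"
    by (auto simp: OCI_eq_shift_maps)
  ultimately show ?thesis
    by blast
qed

lemma disjoint_shift_map_images:
  assumes "k < n" "k' < n" "k \<noteq> k'"
  shows "shift_map n k ` (op_domains n k - {{}}) \<inter> shift_map n k' ` (op_domains n k' - {{}}) = {}"
proof (rule ccontr)
  assume "\<not> ?thesis"
  then obtain D D' where D: "D \<in> op_domains n k" "D \<noteq> {}" and D': "D' \<in> op_domains n k'"
    and eq: "shift_map n k D = shift_map n k' D'"
    by blast
  then have "D = D'"
    by (metis dom_shift_map)
  obtain i where i: "i \<in> D"
    using D by blast
  with D have "i \<in> {1..n}"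
    by (auto simp: op_domains_def)
  moreover have "cyc_shift n k i = cyc_shift n k' i"
    using fun_cong[OF eq, of i] i \<open>D = D'\<close> by (simp add: shift_map_apply)
  ultimately show False
    using cyc_shift_eq_imp_eq assms by blast
qed

lemma card_OCI_eq_sum:
  assumes "n \<ge> 1"
  shows "card (OCI n) = 1 + (\<Sum>k<n. card (op_domains n k - {{}}))"
proof -
  let ?U = "\<Union>k<n. shift_map n k ` (op_domains n k - {{}})"
  have "card ?U = (\<Sum>k<n. card (shift_map n k ` (op_domains n k - {{}})))"
    by (rule card_UN_disjoint) (auto simp: finite_op_domains disjoint_shift_map_images)
  also have "\<dots> = (\<Sum>k<n. card (op_domains n k - {{}}))"
    by (simp add: card_image[OF inj_on_subset[OF inj_shift_map subset_UNIV]])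
  finally have "card ?U = (\<Sum>k<n. card (op_domains n k - {{}}))" .
  moreover have "Map.empty \<notin> ?U"
    by auto
  moreover have "finite ?U"
    by (simp add: finite_op_domains)
  ultimately show ?thesis
    using assms by (simp add: OCI_eq_insert_empty)
qed

lemma sum_power2_reflected:
  assumes "n \<ge> 1"
  shows "(\<Sum>k\<in>{1..<n}. 2 ^ (n - k) + 2 ^ k) + 4 = 2 * (2::nat) ^ n"
proof -
  have "(\<Sum>k\<in>{1..<n}. (2::nat) ^ (n - k)) = (\<Sum>k\<in>{1..<n}. 2 ^ k)"
    by (rule sum.reindex_bij_witness[of _ "\<lambda>k. n - k" "\<lambda>k. n - k"]) auto
  moreover have "(\<Sum>k\<in>{1..<n}. (2::nat) ^ k) + 2 = 2 ^ n"
  proof -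
    have "(\<Sum>k\<in>{0..<n}. (2::nat) ^ k) = 1 + (\<Sum>k\<in>{1..<n}. 2 ^ k)"
      using assms by (simp add: sum.atLeast_Suc_lessThan)
    then show ?thesis
      using sum_power2[of n] by (simp add: Suc_leI)
  qed
  ultimately show ?thesis
    unfolding sum.distrib by linarith
qed

theorem theorem1p4:
  fixes n :: nat
  assumes "n \<ge> 1"
  shows "card (OCI n) = 3 * 2 ^ n - 2 * n - 2"
proof -
  let ?c = "\<lambda>k. card (op_domains n k - {{}})"
  have c_eq: "?c k + 1 = card (op_domains n k)" for k
    using card.remove[OF finite_op_domains empty_in_op_domains] by simp
  have "?c 0 + 1 = 2 ^ n"
    using c_eq[of 0] by (simp add: op_domains_0 card_Pow)
  moreover have "(\<Sum>k\<in>{1..<n}. ?c k) + 2 * (n - 1) + 4 = 2 * 2 ^ n"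
  proof -
    have "(\<Sum>k\<in>{1..<n}. ?c k) + 2 * (n - 1) = (\<Sum>k\<in>{1..<n}. ?c k + 2)"
      by (simp only: sum.distrib) simp
    also have "\<dots> = (\<Sum>k\<in>{1..<n}. 2 ^ (n - k) + 2 ^ k)"
      using card_op_domains_pos c_eq by (intro sum.cong) (auto simp: algebra_simps)
    finally show ?thesis
      using sum_power2_reflected[OF assms] by simp
  qed
  moreover have "card (OCI n) = 1 + ?c 0 + (\<Sum>k\<in>{1..<n}. ?c k)"
    using card_OCI_eq_sum[OF assms] assms
    by (simp add: lessThan_atLeast0 sum.atLeast_Suc_lessThan)
  ultimately show ?thesis
    using assms by linarith
qed

end
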